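(* Let $(\mathfrak g,\mathcal F_\bullet\mathfrak g,R)$ be a filtered Rota–Baxter Lie algebra over a field of characteristic zero. For every $n\ge1$, $\mathcal F_nU(\mathfrak g)=\mathcal F_nU(\mathfrak g_R)$ as subspaces of $U(\mathfrak g)$.
   Context: Filtered Rota–Baxter Lie algebra: a Lie algebra $\mathfrak g$ with subspaces $\mathfrak g=\mathcal F_1\mathfrak g\supset\mathcal F_2\mathfrak g\supset\cdots$, $[\mathcal F_n\mathfrak g,\mathcal F_m\mathfrak g]\subset\mathcal F_{n+m}\mathfrak g$, and a linear map $R$ with $[R(x),R(y)]=R([R(x),y]+[x,R(y)]+[x,y])$ and $R(\mathcal F_n\mathfrak g)\subset\mathcal F_n\mathfrak g$. Let $\mathcal R:U(\mathfrak g)\to U(\mathfrak g)$ be the well-defined linear map with $\mathcal R(1)=1$, $\mathcal R(x)=R(x)$, $\mathcal R(xh)=R(x)\mathcal R(h)-\mathcal R([R(x),h])$ ($x\in\mathfrak g$, $h\in U(\mathfrak g)$). Define $a\star b=a_{(1)}\mathcal R(a_{(2)})\,b\,S(\mathcal R(a_{(3)}))$ on $U(\mathfrak g)$ (Sweedler notation). The descendant Lie algebra $\mathfrak g_R$ is $\mathfrak g$ with bracket $[x,y]_R=[R(x),y]+[x,R(y)]+[x,y]$; the algebra $(U(\mathfrak g),\star)$ is identified with $U(\mathfrak g_R)$ (identity on $\mathfrak g$). $\mathcal F_nU(\mathfrak g)$ ($n\ge1$) is the span of products $x_1\cdots x_k$ in $U(\mathfrak g)$ with $k\ge1$, $x_i\in\mathcal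 F_{n_i}\mathfrak g$, $\sum n_i\ge n$; $\mathcal F_nU(\mathfrak g_R)$ is the span of $x_1\star x_2\star\cdots\star x_k$ with the same conditions. *)

theory Defs
  imports Complex_Main "HOL-Library.Poly_Mapping"
begin

definition lie_algebra :: "('k::field \<Rightarrow> 'g::ab_group_add \<Rightarrow> 'g) \<Rightarrow> ('g \<Rightarrow> 'g \<Rightarrow> 'g) \<Rightarrow> bool" where
  "lie_algebra scale br \<longleftrightarrow>
     Vector_Spaces.vector_space scale \<and>
     (\<forall>x y z. br (x + y) z = br x z + br y z) \<and>
     (\<forall>x y z. br x (y + z) = br x y + br x z) \<and>
     (\<forall>c x y. br (scale c x) y = scale c (br x y)) \<and>
     (\<forall>c x y. br x (scale c y) = scale c (br x y)) \<and>
     (\<forall>x. br x x = 0) \<and>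
     (\<forall>x y z. br x (br y z) + br y (br z x) + br z (br x y) = 0)"

definition rota_baxter :: "('k::field \<Rightarrow> 'g::ab_group_add \<Rightarrow> 'g) \<Rightarrow> ('g \<Rightarrow> 'g \<Rightarrow> 'g) \<Rightarrow> ('g \<Rightarrow> 'g) \<Rightarrow> bool" where
  "rota_baxter scale br R \<longleftrightarrow>
     Vector_Spaces.linear scale scale R \<and>
     (\<forall>x y. br (R x) (R y) = R (br (R x) y + br x (R y) + br x y))"

text \<open>Filtration g = F 1 \<supseteq> F 2 \<supseteq> ... by subspaces with [F n, F m] \<subseteq> F (n+m).
  Only the indices n \<ge> 1 are meaningful; F 0 is irrelevant.\<close>

definition lie_filtration :: "('k::field \<Rightarrow> 'g::ab_group_add \<Rightarrow> 'g) \<Rightarrow> ('g \<Rightarrow> 'g \<Rightarrow> 'g) \<Rightarrow> (nat \<Rightarrow> 'g set) \<Rightarrow> bool" where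
  "lie_filtration scale br F \<longleftrightarrow>
     F 1 = UNIV \<and>
     (\<forall>n\<ge>1. module.subspace scale (F n)) \<and>
     (\<forall>n\<ge>1. F (Suc n) \<subseteq> F n) \<and>
     (\<forall>n\<ge>1. \<forall>m\<ge>1. \<forall>x\<in>F n. \<forall>y\<in>F m. br x y \<in> F (n + m))"

definition filtered_rota_baxter_lie :: "('k::field \<Rightarrow> 'g::ab_group_add \<Rightarrow> 'g) \<Rightarrow> ('g \<Rightarrow> 'g \<Rightarrow> 'g) \<Rightarrow> (nat \<Rightarrow> 'g set) \<Rightarrow> ('g \<Rightarrow> 'g) \<Rightarrow> bool" where
  "filtered_rota_baxter_lie scale br F R \<longleftrightarrow>
     lie_algebra scale br \<and> lie_filtration scale br F \<and> rota_baxter scale br R \<and>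
     (\<forall>n\<ge>1. R ` F n \<subseteq> F n)"

text \<open>The free associative 'k-algebra on the underlying set of g: finitely supported
  'k-valued functions on words. U(g) is its quotient by the two-sided ideal UIdeal
  generated by the linearity relations and x y - y x - [x,y]. Subspaces of U(g) are
  represented by their preimages in the free algebra (subspaces containing UIdeal).\<close>

type_synonym ('g, 'k) free_alg = "'g list \<Rightarrow>\<^sub>0 'k"

definition wd :: "'g list \<Rightarrow> ('g, 'k::field) free_alg" where
  "wd w = Poly_Mapping.single w 1"

definition smul :: "'k::field \<Rightarrow> ('g, 'k) free_alg \<Rightarrow> ('g, 'k) free_alg" where
  "smul c p = Poly_Mapping.map ((*) c) p"

definition lin :: "('g list \<Rightarrow> ('h, 'k::field) free_alg) \<Rightarrow> ('g, 'k) free_alg \<Rightarrow> ('h, 'k) free_alg" where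
  "lin f p = (\<Sum>u\<in>Poly_Mapping.keys p. smul (Poly_Mapping.lookup p u) (f u))"

definition fmul :: "('g, 'k::field) free_alg \<Rightarrow> ('g, 'k) free_alg \<Rightarrow> ('g, 'k) free_alg" where
  "fmul p q = lin (\<lambda>u. lin (\<lambda>v. wd (u @ v)) q) p"

inductive_set kspan :: "('g, 'k::field) free_alg set \<Rightarrow> ('g, 'k) free_alg set" for S where
  kspan_zero: "0 \<in> kspan S"
| kspan_step: "s \<in> S \<Longrightarrow> p \<in> kspan S \<Longrightarrow> smul c s + p \<in> kspan S"

definition env_rels :: "('k::field \<Rightarrow> 'g::ab_group_add \<Rightarrow> 'g) \<Rightarrow> ('g \<Rightarrow> 'g \<Rightarrow> 'g) \<Rightarrow> ('g, 'k) free_alg set" where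
  "env_rels scale br =
     {wd [x + y] - wd [x] - wd [y] | x y. True} \<union>
     {wd [scale c x] - smul c (wd [x]) | c x. True} \<union>
     {wd [x, y] - wd [y, x] - wd [br x y] | x y. True}"

definition UIdeal :: "('k::field \<Rightarrow> 'g::ab_group_add \<Rightarrow> 'g) \<Rightarrow> ('g \<Rightarrow> 'g \<Rightarrow> 'g) \<Rightarrow> ('g, 'k) free_alg set" where
  "UIdeal scale br = kspan {fmul (wd u) (fmul r (wd v)) | u r v. r \<in> env_rels scale br}"

definition antipode :: "('g, 'k::field) free_alg \<Rightarrow> ('g, 'k) free_alg" where
  "antipode = lin (\<lambda>w. smul ((-1) ^ length w) (wd (rev w)))"

function calR :: "('g \<Rightarrow> 'g \<Rightarrow> 'g) \<Rightarrow> ('g \<Rightarrow> 'g) \<Rightarrow> 'g list \<Rightarrow> ('g, 'k::field) free_alg" where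
  "calR br R [] = wd []"
| "calR br R (x # h) = fmul (wd [R x]) (calR br R h)
      - (\<Sum>i<length h. calR br R (h[i := br (R x) (h ! i)]))"
  by pat_completeness auto
termination by (relation "measure (\<lambda>(_, _, w). length w)") auto

text \<open>Iterated coproduct of a word of primitive elements: sum over all ways to
  distribute the letters (keeping order) among three tensor factors.\<close>
definition labelings :: "'g list \<Rightarrow> nat list set" where
  "labelings w = {ls. length ls = length w \<and> set ls \<subseteq> {0, 1, 2}}"

definition subword :: "'g list \<Rightarrow> nat list \<Rightarrow> nat \<Rightarrow> 'g list" where
  "subword w ls j = map fst (filter (\<lambda>p. snd p = j) (zip w ls))"

text \<open>a \<star> b = a_(1) \<R>(a_(2)) b S(\<R>(a_(3))).\<close>
definition star :: "('g \<Rightarrow> 'g \<Rightarrow> 'g) \<Rightarrow> ('g \<Rightarrow> 'g) \<Rightarrow> ('g, 'k::field) free_alg \<Rightarrow> ('g, 'k) free_alg \<Rightarrow> ('g, 'k) free_alg" where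
  "star br R a b = lin (\<lambda>w. \<Sum>ls\<in>labelings w.
       fmul (wd (subword w ls 0))
         (fmul (calR br R (subword w ls 1))
           (fmul b (antipode (calR br R (subword w ls 2)))))) a"

fun star_word :: "('g \<Rightarrow> 'g \<Rightarrow> 'g) \<Rightarrow> ('g \<Rightarrow> 'g) \<Rightarrow> 'g list \<Rightarrow> ('g, 'k::field) free_alg" where
  "star_word br R [] = wd []"
| "star_word br R [x] = wd [x]"
| "star_word br R (x # y # xs) = star br R (wd [x]) (star_word br R (y # xs))"

definition filt_weight :: "(nat \<Rightarrow> 'g set) \<Rightarrow> nat \<Rightarrow> 'g list \<Rightarrow> bool" where
  "filt_weight F n xs \<longleftrightarrow> xs \<noteq> [] \<and>
     (\<exists>ns. length ns = length xs \<and> (\<forall>i<length xs. ns ! i \<ge> 1 \<and> xs ! i \<in> F (ns ! i))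
           \<and> sum_list ns \<ge> n)"

text \<open>Preimage in the free algebra of F_n U(g).\<close>
definition FU :: "('k::field \<Rightarrow> 'g::ab_group_add \<Rightarrow> 'g) \<Rightarrow> ('g \<Rightarrow> 'g \<Rightarrow> 'g) \<Rightarrow> (nat \<Rightarrow> 'g set) \<Rightarrow> nat \<Rightarrow> ('g, 'k) free_alg set" where
  "FU scale br F n = kspan ({wd xs | xs. filt_weight F n xs} \<union> UIdeal scale br)"

text \<open>Preimage in the free algebra of F_n U(g_R), viewed inside U(g) via \<star>.\<close>
definition FUR :: "('k::field \<Rightarrow> 'g::ab_group_add \<Rightarrow> 'g) \<Rightarrow> ('g \<Rightarrow> 'g \<Rightarrow> 'g) \<Rightarrow> (nat \<Rightarrow> 'g set) \<Rightarrow> ('g \<Rightarrow> 'g) \<Rightarrow> nat \<Rightarrow> ('g, 'k) free_alg set" where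
  "FUR scale br F R n = kspan ({star_word br R xs | xs. filt_weight F n xs} \<union> UIdeal scale br)"

end

theory Submission
  imports Defs
begin

text \<open>For a single letter x the coproduct formula gives x \<star> b = x b + [R x, b] in U(g).
  Since R and the bracket respect the filtration, left \<star>-multiplication by an element of
  F k g raises the filtration degree of U(g) by k, so every \<star>-word of weight n lies in
  F n U(g). Conversely x W = x \<star> W - [R x, W], where [R x, W] is, modulo the defining ideal
  of U(g), a sum of words of the same length as W with one letter x' replaced by
  [R x, x'] of higher degree; induction on the length of words gives the other inclusion.\<close>

lemma lookup_smul: "Poly_Mapping.lookup (smul c p) w = c * Poly_Mapping.lookup p w"
  by (simp add: smul_def map.rep_eq when_def)

interpretation free_alg: vector_space "smul :: 'k::field \<Rightarrow> ('g, 'k) free_alg \<Rightarrow> _"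
  by unfold_locales (auto intro!: poly_mapping_eqI simp: lookup_smul lookup_add algebra_simps)

interpretation free_alg: vector_space_pair
  "smul :: 'k::field \<Rightarrow> ('g, 'k) free_alg \<Rightarrow> _" "smul :: 'k::field \<Rightarrow> ('h, 'k) free_alg \<Rightarrow> _" ..

lemma kspan_eq_span: "kspan S = free_alg.span S"
proof
  show "kspan S \<subseteq> free_alg.span S"
  proof
    fix p assume "p \<in> kspan S"
    then show "p \<in> free_alg.span S"
      by induction (auto intro: free_alg.span_zero free_alg.span_add free_alg.span_scale free_alg.span_base)
  qed
  show "free_alg.span S \<subseteq> kspan S"
  proof
    fix p assume "p \<in> free_alg.span S"
    then show "p \<in> kspan S"
      by (induction rule: free_alg.span_induct_alt) (auto intro: kspan.intros)
  qed
qed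

lemma lin_eq_sum_superset:
  assumes "finite A" "Poly_Mapping.keys p \<subseteq> A"
  shows "lin f p = (\<Sum>u\<in>A. smul (Poly_Mapping.lookup p u) (f u))"
  unfolding lin_def by (rule sum.mono_neutral_left) (use assms in \<open>auto simp: in_keys_iff\<close>)

lemma linear_lin: "Vector_Spaces.linear smul smul (lin f)"
proof -
  have "lin f (p + q) = lin f p + lin f q" for p q
  proof -
    let ?A = "Poly_Mapping.keys p \<union> Poly_Mapping.keys q"
    have "lin f (p + q) = (\<Sum>u\<in>?A. smul (Poly_Mapping.lookup (p + q) u) (f u))"
      by (rule lin_eq_sum_superset) (auto simp: keys_add)
    also have "\<dots> = (\<Sum>u\<in>?A. smul (Poly_Mapping.lookup p u) (f u))
                   + (\<Sum>u\<in>?A. smul (Poly_Mapping.lookup q u) (f u))"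
      by (simp add: lookup_add free_alg.scale_left_distrib sum.distrib)
    also have "\<dots> = lin f p + lin f q"
      by (subst (1 2) lin_eq_sum_superset[symmetric]) auto
    finally show ?thesis .
  qed
  moreover have "lin f (smul c p) = smul c (lin f p)" for c p
  proof -
    have "lin f (smul c p) = (\<Sum>u\<in>Poly_Mapping.keys p. smul (Poly_Mapping.lookup (smul c p) u) (f u))"
      by (rule lin_eq_sum_superset) (auto simp: in_keys_iff lookup_smul)
    then show ?thesis
      by (simp add: lin_def free_alg.scale_sum_right lookup_smul)
  qed
  ultimately show ?thesis
    by (simp add: Vector_Spaces.linear_iff free_alg.vector_space_axioms)
qed

lemma lin_wd [simp]: "lin f (wd u) = f u"
  by (simp add: lin_def wd_def)

lemma lin_wd_self: "lin wd p = p"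
proof (rule poly_mapping_eqI)
  fix w
  have "Poly_Mapping.lookup (lin wd p) w
      = (\<Sum>u\<in>Poly_Mapping.keys p. if u = w then Poly_Mapping.lookup p u else 0)"
    by (simp add: lin_def wd_def lookup_sum lookup_smul lookup_single when_def if_distrib cong: if_cong)
  also have "\<dots> = Poly_Mapping.lookup p w"
    by (auto simp: in_keys_iff)
  finally show "Poly_Mapping.lookup (lin wd p) w = Poly_Mapping.lookup p w" .
qed

lemma span_range_wd: "free_alg.span (range wd) = UNIV"
proof -
  have "lin wd p \<in> free_alg.span (range wd)" for p :: "('g, 'k::field) free_alg"
    unfolding lin_def by (intro free_alg.span_sum free_alg.span_scale free_alg.span_base) auto
  then show ?thesis by (auto simp: lin_wd_self)
qed

lemma linear_eq_on_words:
  fixes L L' :: "('g, 'k::field) free_alg \<Rightarrow> ('h, 'k) free_alg"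
  assumes "Vector_Spaces.linear smul smul L" "Vector_Spaces.linear smul smul L'"
    and "\<And>u. L (wd u) = L' (wd u)"
  shows "L p = L' p"
  using free_alg.linear_eq_on_span[OF assms(1,2)] assms(3) span_range_wd by blast

lemma linear_fmul_left: "Vector_Spaces.linear smul smul (\<lambda>p. fmul p q)"
  unfolding fmul_def by (rule linear_lin)

lemma linear_fmul_right:
  fixes p :: "('g, 'k::field) free_alg"
  shows "Vector_Spaces.linear smul smul (\<lambda>q. fmul p q)"
proof -
  have lin_add_fun: "lin (\<lambda>u. f u + g u) p = lin f p + lin g p"
    for f g :: "_ \<Rightarrow> ('g, 'k::field) free_alg"
    by (simp add: lin_def free_alg.scale_right_distrib sum.distrib)
  have lin_smul_fun: "lin (\<lambda>u. smul c (f u)) p = smul c (lin f p)"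
    for c and f :: "_ \<Rightarrow> ('g, 'k::field) free_alg"
    by (simp add: lin_def free_alg.scale_sum_right mult.commute)
  show ?thesis
    unfolding fmul_def
    by (simp add: Vector_Spaces.linear_iff free_alg.vector_space_axioms lin_add_fun lin_smul_fun
        free_alg.linear_add[OF linear_lin] free_alg.linear_scale[OF linear_lin])
qed

lemma fmul_wd [simp]: "fmul (wd u) (wd v) = wd (u @ v)"
  by (simp add: fmul_def)

lemma fmul_assoc: "fmul (fmul p q) r = fmul p (fmul q r)"
proof -
  note linear_comp = Vector_Spaces.linear_compose[unfolded comp_def]
  have words: "fmul (wd (a @ b)) r = fmul (wd a) (fmul (wd b) r)" for a b
    by (rule linear_eq_on_words[OF linear_fmul_right linear_comp[OF linear_fmul_right linear_fmul_right]])
      simp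
  have word_left: "fmul (fmul (wd a) q) r = fmul (wd a) (fmul q r)" for a
    by (rule linear_eq_on_words[where L = "\<lambda>q. fmul (fmul (wd a) q) r"])
      (auto intro: linear_comp linear_fmul_left linear_fmul_right simp: words)
  show ?thesis
    by (rule linear_eq_on_words[where L = "\<lambda>p. fmul (fmul p q) r"])
      (auto intro: linear_comp linear_fmul_left simp: word_left)
qed

lemma fmul_one_left [simp]: "fmul (wd []) p = p"
  using linear_eq_on_words[OF linear_fmul_right[of "wd []"] free_alg.linear_id] by (simp add: id_def)

lemma fmul_one_right [simp]: "fmul p (wd []) = p"
  using linear_eq_on_words[OF linear_fmul_left[of "wd []"] free_alg.linear_id] by (simp add: id_def)

lemma linear_image_span_subset:
  assumes "Vector_Spaces.linear smul smul L" "L ` S \<subseteq> free_alg.span T"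
  shows "L ` free_alg.span S \<subseteq> free_alg.span T"
  using free_alg.span_mono[OF assms(2)]
  by (simp add: free_alg.linear_span_image[OF assms(1), symmetric] free_alg.span_span)

lemma UIdeal_eq_span:
  "UIdeal scale br = free_alg.span {fmul (wd u) (fmul r (wd v)) | u r v. r \<in> env_rels scale br}"
  by (simp add: UIdeal_def kspan_eq_span)

lemma subspace_UIdeal: "free_alg.subspace (UIdeal scale br)"
  by (simp add: UIdeal_eq_span)

lemma fmul_wd_UIdeal:
  assumes "q \<in> UIdeal scale br"
  shows "fmul (wd a) q \<in> UIdeal scale br" and "fmul q (wd a) \<in> UIdeal scale br"
proof -
  let ?G = "{fmul (wd u) (fmul r (wd v)) | u r v. r \<in> env_rels scale br}"
  have "fmul (wd a) ` ?G \<subseteq> free_alg.span ?G"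
    by (force simp: fmul_assoc[symmetric] intro: free_alg.span_base)
  from linear_image_span_subset[OF linear_fmul_right this] assms
  show "fmul (wd a) q \<in> UIdeal scale br"
    by (auto simp: UIdeal_eq_span)
  have "(\<lambda>q. fmul q (wd a)) ` ?G \<subseteq> free_alg.span ?G"
    by (force simp: fmul_assoc intro: free_alg.span_base)
  from linear_image_span_subset[OF linear_fmul_left this] assms
  show "fmul q (wd a) \<in> UIdeal scale br"
    by (auto simp: UIdeal_eq_span)
qed

lemma fmul_UIdeal:
  assumes "q \<in> UIdeal scale br"
  shows "fmul p q \<in> UIdeal scale br" and "fmul q p \<in> UIdeal scale br"
proof -
  have "free_alg.span (range wd) \<subseteq> (\<lambda>p. fmul p q) -` UIdeal scale br"
    by (rule free_alg.span_minimal)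
      (use fmul_wd_UIdeal[OF assms] in
        \<open>auto intro: free_alg.linear_subspace_vimage subspace_UIdeal linear_fmul_left\<close>)
  moreover have "free_alg.span (range wd) \<subseteq> (\<lambda>p. fmul q p) -` UIdeal scale br"
    by (rule free_alg.span_minimal)
      (use fmul_wd_UIdeal[OF assms] in
        \<open>auto intro: free_alg.linear_subspace_vimage subspace_UIdeal linear_fmul_right\<close>)
  ultimately show "fmul p q \<in> UIdeal scale br" "fmul q p \<in> UIdeal scale br"
    by (auto simp: span_range_wd)
qed

definition ad_wd :: "('g \<Rightarrow> 'g \<Rightarrow> 'g) \<Rightarrow> 'g \<Rightarrow> 'g list \<Rightarrow> ('g, 'k::field) free_alg" where
  "ad_wd br y W = (\<Sum>i<length W. wd (W[i := br y (W ! i)]))"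

lemma ad_wd_Nil [simp]: "ad_wd br y [] = 0"
  by (simp add: ad_wd_def)

lemma ad_wd_Cons: "ad_wd br y (a # W) = wd (br y a # W) + fmul (wd [a]) (ad_wd br y W)"
  unfolding ad_wd_def length_Cons sum.lessThan_Suc_shift
  by (simp add: free_alg.linear_sum[OF linear_fmul_right])

lemma wd_commutator_mod_UIdeal:
  "wd (y # W) - wd (W @ [y]) - ad_wd br y W \<in> UIdeal scale br"
proof (induction W)
  case Nil
  then show ?case by (simp add: free_alg.span_zero UIdeal_eq_span)
next
  case (Cons a W)
  have "wd [y, a] - wd [a, y] - wd [br y a] \<in> env_rels scale br"
    by (auto simp: env_rels_def)
  then have "fmul (wd []) (fmul (wd [y, a] - wd [a, y] - wd [br y a]) (wd W)) \<in> UIdeal scale br"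
    unfolding UIdeal_eq_span by (intro free_alg.span_base) blast
  then have swap: "wd (y # a # W) - wd (a # y # W) - wd (br y a # W) \<in> UIdeal scale br"
    by (simp add: free_alg.linear_diff[OF linear_fmul_left])
  have "fmul (wd [a]) (wd (y # W) - wd (W @ [y]) - ad_wd br y W) \<in> UIdeal scale br"
    by (rule fmul_UIdeal(1)[OF Cons.IH])
  then have shift: "wd (a # y # W) - wd (a # W @ [y]) - fmul (wd [a]) (ad_wd br y W) \<in> UIdeal scale br"
    by (simp add: free_alg.linear_diff[OF linear_fmul_right])
  have eq: "wd (y # a # W) - wd ((a # W) @ [y]) - ad_wd br y (a # W)
      = (wd (y # a # W) - wd (a # y # W) - wd (br y a # W))
        + (wd (a # y # W) - wd (a # W @ [y]) - fmul (wd [a]) (ad_wd br y W))"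
    by (simp add: ad_wd_Cons)
  show ?case
    unfolding eq by (rule free_alg.subspace_add[OF subspace_UIdeal swap shift])
qed

lemma labelings_single: "labelings [x] = {[0], [1], [2]}"
  unfolding labelings_def by (auto simp: length_Suc_conv)

text \<open>A letter x is primitive, so its iterated coproduct is x\<otimes>1\<otimes>1 + 1\<otimes>x\<otimes>1 + 1\<otimes>1\<otimes>x.\<close>

lemma star_single: "star br R (wd [x]) b = fmul (wd [x]) b + fmul (wd [R x]) b - fmul b (wd [R x])"
proof -
  have [simp]: "antipode (wd w) = smul ((-1) ^ length w) (wd (rev w))" for w :: "'g list"
    by (simp add: antipode_def)
  show ?thesis
    by (simp add: star_def labelings_single subword_def free_alg.linear_neg[OF linear_fmul_right])
qed

lemma linear_star_single: "Vector_Spaces.linear smul smul (star br R (wd [x]))"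
  unfolding star_single[abs_def]
  by (intro free_alg.linear_compose_sub free_alg.linear_compose_add linear_fmul_left linear_fmul_right)

lemma star_single_wd: "star br R (wd [x]) (wd ys) = wd (x # ys) + wd (R x # ys) - wd (ys @ [R x])"
  by (simp add: star_single)

lemma star_single_UIdeal: "p \<in> UIdeal scale br \<Longrightarrow> star br R (wd [x]) p \<in> UIdeal scale br"
  unfolding star_single
  by (intro free_alg.subspace_add free_alg.subspace_diff subspace_UIdeal fmul_UIdeal)

lemma star_word_Cons: "ys \<noteq> [] \<Longrightarrow> star_word br R (x # ys) = star br R (wd [x]) (star_word br R ys)"
  by (cases ys) auto

lemma filt_weight_iff:
  "filt_weight F n xs \<longleftrightarrow>
     xs \<noteq> [] \<and> (\<exists>ns. list_all2 (\<lambda>k x. 1 \<le> k \<and> x \<in> F k) ns xs \<and> n \<le> sum_list ns)"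
  unfolding filt_weight_def list_all2_conv_all_nth by auto

lemma filt_weight_nonempty: "filt_weight F n xs \<Longrightarrow> xs \<noteq> []"
  by (simp add: filt_weight_def)

lemma filt_weight_antimono: "filt_weight F n xs \<Longrightarrow> m \<le> n \<Longrightarrow> filt_weight F m xs"
  unfolding filt_weight_iff by (meson order_trans)

lemma filt_weight_Cons:
  "1 \<le> k \<Longrightarrow> x \<in> F k \<Longrightarrow> filt_weight F n xs \<Longrightarrow> filt_weight F (k + n) (x # xs)"
  unfolding filt_weight_iff by (force intro: exI[of _ "k # ns" for ns])

lemma filt_weight_snoc:
  "1 \<le> k \<Longrightarrow> x \<in> F k \<Longrightarrow> filt_weight F n xs \<Longrightarrow> filt_weight F (k + n) (xs @ [x])"
  unfolding filt_weight_iff by (force intro: exI[of _ "ns @ [k]" for ns] list_all2_appendI)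

lemma filt_weight_ConsE:
  assumes "filt_weight F n (x # xs)" "xs \<noteq> []"
  obtains k m where "1 \<le> k" "x \<in> F k" "filt_weight F m xs" "n \<le> k + m"
  using assms unfolding filt_weight_iff list_all2_Cons2 by force

lemma filt_weight_update:
  assumes "filt_weight F n xs" "i < length xs"
    and "\<And>j z. 1 \<le> j \<Longrightarrow> z \<in> F j \<Longrightarrow> f z \<in> F (k + j)"
  shows "filt_weight F (k + n) (xs[i := f (xs ! i)])"
proof -
  obtain ns where ns: "list_all2 (\<lambda>k x. 1 \<le> k \<and> x \<in> F k) ns xs" "n \<le> sum_list ns"
    using assms(1) filt_weight_iff by blast
  have "list_all2 (\<lambda>k x. 1 \<le> k \<and> x \<in> F k) (ns[i := k + ns ! i]) (xs[i := f (xs ! i)])"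
    using ns(1) assms(2,3) by (auto simp: list_all2_conv_all_nth nth_list_update)
  moreover have "sum_list (ns[i := k + ns ! i]) = k + sum_list ns"
    using sum_list_update[of i ns] assms(2) list_all2_lengthD[OF ns(1)] by simp
  ultimately show ?thesis
    using assms(1,2) ns(2) unfolding filt_weight_iff by force
qed

lemma FU_eq_span:
  "FU scale br F n = free_alg.span ({wd xs | xs. filt_weight F n xs} \<union> UIdeal scale br)"
  by (simp add: FU_def kspan_eq_span)

lemma FUR_eq_span:
  "FUR scale br F R n = free_alg.span ({star_word br R xs | xs. filt_weight F n xs} \<union> UIdeal scale br)"
  by (simp add: FUR_def kspan_eq_span)

lemma subspace_FU: "free_alg.subspace (FU scale br F n)"
  by (simp add: FU_eq_span)

lemma subspace_FUR: "free_alg.subspace (FUR scale br F R n)"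
  by (simp add: FUR_eq_span)

lemma wd_in_FU: "filt_weight F n xs \<Longrightarrow> wd xs \<in> FU scale br F n"
  unfolding FU_eq_span by (blast intro: free_alg.span_base)

lemma star_word_in_FUR: "filt_weight F n xs \<Longrightarrow> star_word br R xs \<in> FUR scale br F R n"
  unfolding FUR_eq_span by (blast intro: free_alg.span_base)

lemma UIdeal_subset_FU: "UIdeal scale br \<subseteq> FU scale br F n"
  unfolding FU_eq_span by (blast intro: free_alg.span_base)

lemma UIdeal_subset_FUR: "UIdeal scale br \<subseteq> FUR scale br F R n"
  unfolding FUR_eq_span by (blast intro: free_alg.span_base)

lemma FU_antimono: "m \<le> n \<Longrightarrow> FU scale br F n \<subseteq> FU scale br F m"
  unfolding FU_eq_span by (intro free_alg.span_mono) (auto intro: filt_weight_antimono)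

lemma FUR_antimono: "m \<le> n \<Longrightarrow> FUR scale br F R n \<subseteq> FUR scale br F R m"
  unfolding FUR_eq_span by (intro free_alg.span_mono) (auto intro: filt_weight_antimono)

lemma star_single_FU:
  assumes "1 \<le> k" "x \<in> F k" "R x \<in> F k" "p \<in> FU scale br F n"
  shows "star br R (wd [x]) p \<in> FU scale br F (k + n)"
proof -
  have "star br R (wd [x]) ` ({wd xs | xs. filt_weight F n xs} \<union> UIdeal scale br) \<subseteq> FU scale br F (k + n)"
    using assms(1-3)
    by (auto simp: star_single_wd
        intro!: free_alg.subspace_add free_alg.subspace_diff subspace_FU wd_in_FU
          filt_weight_Cons filt_weight_snoc
        intro: UIdeal_subset_FU[THEN subsetD] star_single_UIdeal)
  from linear_image_span_subset[OF linear_star_single this[unfolded FU_eq_span]] assms(4)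
  show ?thesis by (auto simp: FU_eq_span)
qed

lemma star_single_FUR:
  assumes "1 \<le> k" "x \<in> F k" "p \<in> FUR scale br F R n"
  shows "star br R (wd [x]) p \<in> FUR scale br F R (k + n)"
proof -
  have "star br R (wd [x]) ` ({star_word br R xs | xs. filt_weight F n xs} \<union> UIdeal scale br)
      \<subseteq> FUR scale br F R (k + n)"
    using assms(1,2)
    by (auto simp: star_word_Cons[symmetric] filt_weight_nonempty
        intro!: star_word_in_FUR filt_weight_Cons
        intro: UIdeal_subset_FUR[THEN subsetD] star_single_UIdeal)
  from linear_image_span_subset[OF linear_star_single this[unfolded FUR_eq_span]] assms(3)
  show ?thesis by (auto simp: FUR_eq_span)
qed

lemma star_word_in_FU:
  assumes R_filt: "\<And>k z. 1 \<le> k \<Longrightarrow> z \<in> F k \<Longrightarrow> R z \<in> F k"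
    and "filt_weight F n xs"
  shows "star_word br R xs \<in> FU scale br F n"
  using assms(2)
proof (induction xs arbitrary: n)
  case Nil
  then show ?case by (simp add: filt_weight_def)
next
  case (Cons x xs)
  show ?case
  proof (cases "xs = []")
    case True
    with Cons.prems show ?thesis by (simp add: wd_in_FU)
  next
    case False
    obtain k m where k: "1 \<le> k" "x \<in> F k" and xs: "filt_weight F m xs" and "n \<le> k + m"
      using Cons.prems False by (rule filt_weight_ConsE)
    have "star br R (wd [x]) (star_word br R xs) \<in> FU scale br F (k + m)"
      by (intro star_single_FU k R_filt Cons.IH xs)
    with FU_antimono[OF \<open>n \<le> k + m\<close>] False show ?thesis
      by (auto simp: star_word_Cons)
  qed
qed

lemma wd_in_FUR:
  assumes R_filt: "\<And>k z. 1 \<le> k \<Longrightarrow> z \<in> F k \<Longrightarrow> R z \<in> F k"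
    and br_filt: "\<And>j k y z. 1 \<le> j \<Longrightarrow> 1 \<le> k \<Longrightarrow> y \<in> F j \<Longrightarrow> z \<in> F k \<Longrightarrow> br y z \<in> F (j + k)"
    and "filt_weight F n xs"
  shows "wd xs \<in> FUR scale br F R n"
  using assms(3)
proof (induction "length xs" arbitrary: xs n rule: less_induct)
  case less
  then obtain x W where xs: "xs = x # W"
    by (metis filt_weight_nonempty neq_Nil_conv)
  show ?case
  proof (cases "W = []")
    case True
    with less.prems star_word_in_FUR[of F n xs] show ?thesis by (simp add: xs)
  next
    case False
    obtain k m where k: "1 \<le> k" "x \<in> F k" and W: "filt_weight F m W" and "n \<le> k + m"
      using less.prems False unfolding xs by (rule filt_weight_ConsE)
    have IH: "wd V \<in> FUR scale br F R j" if "filt_weight F j V" "length V = length W" for V j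
      using less.hyps that xs by simp
    have star: "star br R (wd [x]) (wd W) \<in> FUR scale br F R (k + m)"
      by (intro star_single_FUR k IH W refl)
    have ad: "ad_wd br (R x) W \<in> FUR scale br F R (k + m)"
      unfolding ad_wd_def
      by (intro free_alg.subspace_sum subspace_FUR IH filt_weight_update[OF W]
          br_filt[OF k(1)] R_filt[OF k]) auto
    have comm: "wd (R x # W) - wd (W @ [R x]) - ad_wd br (R x) W \<in> FUR scale br F R (k + m)"
      using wd_commutator_mod_UIdeal UIdeal_subset_FUR by blast
    have "wd xs = star br R (wd [x]) (wd W)
        - (wd (R x # W) - wd (W @ [R x]) - ad_wd br (R x) W) - ad_wd br (R x) W"
      by (simp add: xs star_single_wd)
    also have "\<dots> \<in> FUR scale br F R (k + m)"
      by (intro free_alg.subspace_diff subspace_FUR star ad comm)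
    finally have "wd xs \<in> FUR scale br F R (k + m)" .
    with FUR_antimono[OF \<open>n \<le> k + m\<close>] show ?thesis by blast
  qed
qed

theorem proposition4p10:
  fixes scale :: "'k::field_char_0 \<Rightarrow> 'g::ab_group_add \<Rightarrow> 'g"
    and br :: "'g \<Rightarrow> 'g \<Rightarrow> 'g" and F :: "nat \<Rightarrow> 'g set" and R :: "'g \<Rightarrow> 'g"
    and n :: nat
  assumes "filtered_rota_baxter_lie scale br F R"
    and "n \<ge> 1"
  shows "FU scale br F n = FUR scale br F R n"
proof -
  have R_filt: "\<And>k z. 1 \<le> k \<Longrightarrow> z \<in> F k \<Longrightarrow> R z \<in> F k"
    using assms(1) unfolding filtered_rota_baxter_lie_def by blast
  have br_filt: "\<And>j k y z. 1 \<le> j \<Longrightarrow> 1 \<le> k \<Longrightarrow> y \<in> F j \<Longrightarrow> z \<in> F k \<Longrightarrow> br y z \<in> F (j + k)"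
    using assms(1) unfolding filtered_rota_baxter_lie_def lie_filtration_def by blast
  show ?thesis
  proof
    show "FU scale br F n \<subseteq> FUR scale br F R n"
      unfolding FU_eq_span
      by (intro free_alg.span_minimal subspace_FUR)
        (auto intro: wd_in_FUR[where F = F and R = R, OF R_filt br_filt] UIdeal_subset_FUR[THEN subsetD])
    show "FUR scale br F R n \<subseteq> FU scale br F n"
      unfolding FUR_eq_span
      by (intro free_alg.span_minimal subspace_FU)
        (auto intro: star_word_in_FU[where F = F and br = br, OF R_filt] UIdeal_subset_FU[THEN subsetD])
  qed
qed

end
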